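(* Let $\pi\in S_k$ and let $[\overline{\pi}]\subseteq\overline{S_k}$ be the set of totally vincular patterns corresponding to the rotations of $\pi$. Then $\Pi=\overline{S_k}\setminus[\overline{\pi}]$ is a maximum avoidable subset of $\overline{S_k}$, i.e. it is avoidable and no avoidable subset of $\overline{S_k}$ has larger cardinality.
   Context: For $\sigma\in S_n$, the cyclic permutation $[\sigma]$ is the set of all rotations of $\sigma$. For $\pi\in S_k$, the totally vincular pattern $\overline{\pi}$ is $\pi$ with all adjacent positions overlined; a cyclic permutation $[\sigma]$ of length $n\ge k$ contains $\overline{\pi}$ if some $k$ cyclically consecutive entries of $\sigma$ are order-isomorphic to $\pi$. $\overline{S_k}$ is the set of totally vincular patterns of length $k$. For $\Pi\subseteq\overline{S_k}$, $\mathrm{Av}_n[\Pi]$ is the set of cyclic permutations of length $n$ containing no pattern of $\Pi$. $\Pi$ is unavoidable if $|\mathrm{Av}_n[\Pi]|=0$ for all sufficiently large $n$, and avoidable otherwise. *)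

theory Defs
  imports Main
begin

definition perms :: "nat \<Rightarrow> nat list set" where
  "perms n = {xs. distinct xs \<and> set xs = {0..<n}}"

definition order_iso :: "nat list \<Rightarrow> nat list \<Rightarrow> bool" where
  "order_iso xs ys \<longleftrightarrow> length xs = length ys \<and>
     (\<forall>i<length xs. \<forall>j<length xs. xs ! i < xs ! j \<longleftrightarrow> ys ! i < ys ! j)"

definition cyc :: "nat list \<Rightarrow> nat list set" where
  "cyc \<sigma> = range (\<lambda>i. rotate i \<sigma>)"

text \<open>Totally vincular patterns of length k are identified with S_k = perms k.\<close>
definition cyc_contains :: "nat list \<Rightarrow> nat list \<Rightarrow> bool" where
  "cyc_contains \<sigma> p \<longleftrightarrow> length p \<le> length \<sigma> \<and>
     (\<exists>i<length \<sigma>. order_iso (take (length p) (rotate i \<sigma>)) p)"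

definition Av :: "nat \<Rightarrow> nat list set \<Rightarrow> nat list set set" where
  "Av n \<Pi> = {cyc \<sigma> | \<sigma>. \<sigma> \<in> perms n \<and> (\<forall>p\<in>\<Pi>. \<not> cyc_contains \<sigma> p)}"

definition unavoidable :: "nat list set \<Rightarrow> bool" where
  "unavoidable \<Pi> \<longleftrightarrow> (\<exists>N. \<forall>n\<ge>N. card (Av n \<Pi>) = 0)"

definition avoidable :: "nat list set \<Rightarrow> bool" where
  "avoidable \<Pi> \<longleftrightarrow> \<not> unavoidable \<Pi>"

end

(* A cyclic permutation [sigma] of length n >= k contains at least k distinct patterns of
   length k: for each j < k, the window of length k carrying the maximal entry n - 1 at
   position j yields a pattern whose maximum sits at position j. An avoidable set therefore
   misses at least k >= |[pi]| patterns of S_k. Conversely, the complement of [pi] is avoided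
   by permutations of every length mk all of whose cyclic windows of length k are
   order-isomorphic to rotations of pi. *)

theory Submission
  imports Defs
begin

lemma length_perms: "xs \<in> perms n \<Longrightarrow> length xs = n"
  by (auto simp: perms_def dest: distinct_card)

lemma finite_perms [simp]: "finite (perms n)"
proof -
  have "perms n \<subseteq> {xs. set xs \<subseteq> {0..<n} \<and> length xs = n}"
    by (auto simp: perms_def length_perms)
  then show ?thesis
    using finite_lists_length_eq[of "{0..<n}" n] finite_subset by blast
qed

lemma in_perms_lengthI:
  assumes "distinct xs" "set xs \<subseteq> {0..<length xs}"
  shows "xs \<in> perms (length xs)"
  using assms card_subset_eq[of "{0..<length xs}" "set xs"] distinct_card[of xs]
  by (auto simp: perms_def)

lemma rotate_in_perms: "xs \<in> perms n \<Longrightarrow> rotate i xs \<in> perms n"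
  by (simp add: perms_def)

lemma card_perms_nth_less:
  assumes p: "p \<in> perms k" and v: "v \<le> k"
  shows "card {s. s < k \<and> p ! s < v} = v"
proof -
  have bij: "bij_betw ((!) p) {..<k} {0..<k}"
    using p length_perms[OF p] by (intro bij_betw_nth) (auto simp: perms_def)
  have "bij_betw ((!) p) {s. s < k \<and> p ! s < v} {0..<v}"
    using bij_betw_subset[OF bij, of "{s. s < k \<and> p ! s < v}"] bij v
    by (fastforce simp: bij_betw_def image_iff)
  then show ?thesis
    by (simp add: bij_betw_same_card)
qed

lemma order_iso_perms_eq:
  assumes p: "p \<in> perms k" and q: "q \<in> perms k" and iso: "order_iso p q"
  shows "p = q"
proof (rule nth_equalityI)
  have len: "length p = k" "length q = k"
    using p q by (simp_all add: length_perms)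
  then show "length p = length q"
    by simp
  fix t assume t: "t < length p"
  have "p ! t < k" "q ! t < k"
    using p q t len nth_mem[of t p] nth_mem[of t q] by (auto simp: perms_def)
  moreover have "{s. s < k \<and> p ! s < p ! t} = {s. s < k \<and> q ! s < q ! t}"
    using iso t len by (auto simp: order_iso_def)
  ultimately show "p ! t = q ! t"
    using card_perms_nth_less[OF p] card_perms_nth_less[OF q] by (metis less_imp_le)
qed

definition standardize :: "nat list \<Rightarrow> nat list" where
  "standardize xs = map (\<lambda>x. card {y \<in> set xs. y < x}) xs"

lemma order_iso_standardize: "order_iso xs (standardize xs)"
proof -
  have rank_mono: "x < x' \<longleftrightarrow> card {y \<in> set xs. y < x} < card {y \<in> set xs. y < x'}"
    if "x \<in> set xs" "x' \<in> set xs" for x x'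
  proof
    assume "x < x'"
    then have "{y \<in> set xs. y < x} \<subset> {y \<in> set xs. y < x'}"
      using that by auto
    then show "card {y \<in> set xs. y < x} < card {y \<in> set xs. y < x'}"
      by (simp add: psubset_card_mono)
  next
    assume "card {y \<in> set xs. y < x} < card {y \<in> set xs. y < x'}"
    moreover have "card {y \<in> set xs. y < x'} \<le> card {y \<in> set xs. y < x}" if "x' \<le> x"
      using that by (intro card_mono) auto
    ultimately show "x < x'"
      by (meson not_le)
  qed
  show ?thesis
    unfolding order_iso_def standardize_def
  proof (intro conjI allI impI)
    fix i j assume "i < length xs" "j < length xs"
    then show "xs ! i < xs ! j \<longleftrightarrow> map (\<lambda>x. card {y \<in> set xs. y < x}) xs ! i
        < map (\<lambda>x. card {y \<in> set xs. y < x}) xs ! j"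
      using rank_mono[of "xs ! i" "xs ! j"] by simp
  qed simp
qed

lemma standardize_in_perms:
  assumes "distinct xs"
  shows "standardize xs \<in> perms (length xs)"
proof -
  have "card {y \<in> set xs. y < x} < length xs" if "x \<in> set xs" for x
  proof -
    have "card {y \<in> set xs. y < x} \<le> card (set xs - {x})"
      by (intro card_mono) auto
    also have "\<dots> < card (set xs)"
      using card_Diff1_less[OF finite_set that] .
    finally show ?thesis
      using distinct_card[OF assms] by simp
  qed
  then have "set (standardize xs) \<subseteq> {0..<length (standardize xs)}"
    by (auto simp: standardize_def)
  moreover have "distinct (standardize xs)"
    using order_iso_standardize[of xs] assms
    by (auto simp: order_iso_def distinct_conv_nth nat_neq_iff)
  ultimately show ?thesis
    using in_perms_lengthI by (metis length_map standardize_def)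
qed

lemma mult_add_less_mult_add:
  fixes a b q q' m :: nat
  assumes "a < b" "q < m"
  shows "a * m + q < b * m + q'"
proof -
  have "Suc a * m \<le> b * m"
    using assms by (intro mult_le_mono1) simp
  then show ?thesis
    using assms by simp
qed

lemma order_iso_mult_add:
  assumes len: "length xs = length ys" and dist: "distinct ys"
    and entries: "\<And>t. t < length ys \<Longrightarrow> xs ! t = ys ! t * m + r t \<and> r t < m"
  shows "order_iso xs ys"
  unfolding order_iso_def
proof (intro conjI allI impI len)
  fix s t assume s: "s < length xs" and t: "t < length xs"
  show "xs ! s < xs ! t \<longleftrightarrow> ys ! s < ys ! t"
  proof (cases "s = t")
    case False
    then consider "ys ! s < ys ! t" | "ys ! t < ys ! s"
      using dist s t len by (metis linorder_neqE_nat nth_eq_iff_index_eq)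
    then show ?thesis
    proof cases
      case 1
      then show ?thesis
        using mult_add_less_mult_add[OF 1, where q = "r s" and q' = "r t" and m = m]
          entries[of s] entries[of t] s t len by simp
    next
      case 2
      then show ?thesis
        using mult_add_less_mult_add[OF 2, where q = "r t" and q' = "r s" and m = m]
          entries[of s] entries[of t] s t len by simp
    qed
  qed simp
qed

(* The c-th of m consecutive copies of pi has each entry x replaced by x * m + c, so that
   within any window of length |pi| the order is decided by the entries of pi alone. *)
definition blowup :: "nat \<Rightarrow> nat list \<Rightarrow> nat list" where
  "blowup m \<pi> = map (\<lambda>j. \<pi> ! (j mod length \<pi>) * m + j div length \<pi>) [0..<m * length \<pi>]"

lemma length_blowup [simp]: "length (blowup m \<pi>) = m * length \<pi>"
  by (simp add: blowup_def)

lemma nth_blowup: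
  "j < m * length \<pi> \<Longrightarrow> blowup m \<pi> ! j = \<pi> ! (j mod length \<pi>) * m + j div length \<pi>"
  by (simp add: blowup_def)

lemma distinct_blowup:
  assumes "distinct \<pi>"
  shows "distinct (blowup m \<pi>)"
  unfolding blowup_def distinct_map set_upt
proof (intro conjI distinct_upt inj_onI)
  let ?k = "length \<pi>"
  fix a b assume a: "a \<in> {0..<m * ?k}" and b: "b \<in> {0..<m * ?k}"
    and eq: "\<pi> ! (a mod ?k) * m + a div ?k = \<pi> ! (b mod ?k) * m + b div ?k"
  have "0 < m * ?k"
    using a by (simp only: atLeastLessThan_iff) linarith
  then have "0 < m" "0 < ?k"
    by simp_all
  moreover have "a div ?k < m" "b div ?k < m"
    using a b by (simp_all add: less_mult_imp_div_less)
  ultimately have "\<pi> ! (a mod ?k) = \<pi> ! (b mod ?k)" "a div ?k = b div ?k"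
    using arg_cong[OF eq, of "\<lambda>x. x div m"] arg_cong[OF eq, of "\<lambda>x. x mod m"] by simp_all
  with \<open>0 < ?k\<close> have "a mod ?k = b mod ?k"
    using assms by (simp add: nth_eq_iff_index_eq)
  then show "a = b"
    using \<open>a div ?k = b div ?k\<close> by (metis div_mult_mod_eq)
qed

lemma blowup_in_perms:
  assumes \<pi>: "\<pi> \<in> perms k"
  shows "blowup m \<pi> \<in> perms (m * k)"
proof -
  have len: "length \<pi> = k"
    using \<pi> by (rule length_perms)
  have "blowup m \<pi> ! j < m * k" if j: "j < m * k" for j
  proof -
    have "0 < m * k"
      using j by linarith
    then have "0 < k"
      by simp
    then have "\<pi> ! (j mod k) < k"
      using \<pi> len nth_mem[of "j mod k" \<pi>] by (auto simp: perms_def)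
    then have "\<pi> ! (j mod k) * m + j div k < k * m + 0"
      using j by (intro mult_add_less_mult_add) (simp_all add: less_mult_imp_div_less)
    then show ?thesis
      using j len by (simp add: nth_blowup mult.commute)
  qed
  then have "set (blowup m \<pi>) \<subseteq> {0..<length (blowup m \<pi>)}"
    using len by (auto simp: in_set_conv_nth)
  moreover have "distinct (blowup m \<pi>)"
    using \<pi> by (simp add: perms_def distinct_blowup)
  ultimately show ?thesis
    using in_perms_lengthI len by fastforce
qed

lemma order_iso_window_blowup:
  assumes \<pi>: "\<pi> \<in> perms k" and m: "0 < m"
  shows "order_iso (take k (rotate i (blowup m \<pi>))) (rotate i \<pi>)"
proof (rule order_iso_mult_add)
  have len: "length \<pi> = k"
    using \<pi> by (rule length_perms)
  then show "length (take k (rotate i (blowup m \<pi>))) = length (rotate i \<pi>)"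
    using m by simp
  show "distinct (rotate i \<pi>)"
    using \<pi> by (simp add: perms_def)
  fix t assume "t < length (rotate i \<pi>)"
  then have t: "t < k" and t': "t < m * k"
    using len m by (auto intro: less_le_trans)
  let ?j = "(i + t) mod (m * k)"
  have j: "?j < m * k"
    using m t by (intro mod_less_divisor) simp
  have "take k (rotate i (blowup m \<pi>)) ! t = blowup m \<pi> ! ?j"
    using t t' len by (simp add: nth_rotate)
  also have "\<dots> = \<pi> ! (?j mod k) * m + ?j div k"
    using j len by (simp add: nth_blowup)
  also have "?j mod k = (i + t) mod k"
    by (simp add: mod_mod_cancel)
  also have "\<pi> ! ((i + t) mod k) = rotate i \<pi> ! t"
    using t len by (simp add: nth_rotate)
  finally show "take k (rotate i (blowup m \<pi>)) ! t = rotate i \<pi> ! t * m + ?j div k \<and> ?j div k < m"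
    using j by (simp add: less_mult_imp_div_less)
qed

lemma finite_Av: "finite (Av n \<Pi>)"
proof -
  have "Av n \<Pi> \<subseteq> cyc ` perms n"
    by (auto simp: Av_def)
  then show ?thesis
    by (rule finite_subset) simp
qed

lemma avoidable_iff:
  "avoidable \<Pi> \<longleftrightarrow> (\<forall>N. \<exists>n\<ge>N. \<exists>\<sigma>\<in>perms n. \<forall>p\<in>\<Pi>. \<not> cyc_contains \<sigma> p)"
proof -
  have "card (Av n \<Pi>) = 0 \<longleftrightarrow> \<not> (\<exists>\<sigma>\<in>perms n. \<forall>p\<in>\<Pi>. \<not> cyc_contains \<sigma> p)" for n
    by (auto simp: card_0_eq[OF finite_Av] Av_def)
  then show ?thesis
    by (simp add: avoidable_def unavoidable_def)
qed

lemma avoidable_empty: "avoidable {}"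
proof -
  have "[0..<N] \<in> perms N" for N
    by (simp add: perms_def)
  then show ?thesis
    unfolding avoidable_iff by blast
qed

lemma Nil_notin_avoidable:
  assumes "avoidable \<Pi>"
  shows "[] \<notin> \<Pi>"
proof
  assume "[] \<in> \<Pi>"
  then obtain n \<sigma> where "1 \<le> n" "\<sigma> \<in> perms n" "\<not> cyc_contains \<sigma> []"
    using assms unfolding avoidable_iff by blast
  moreover have "cyc_contains \<sigma> []" if "\<sigma> \<noteq> []"
    using that by (auto simp: cyc_contains_def order_iso_def)
  ultimately show False
    using length_perms by fastforce
qed

lemma avoidable_perms_diff_cyc:
  assumes \<pi>: "\<pi> \<in> perms k" and k: "0 < k"
  shows "avoidable (perms k - cyc \<pi>)"
  unfolding avoidable_iff
proof
  fix N
  let ?\<sigma> = "blowup (Suc N) \<pi>"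
  have "\<not> cyc_contains ?\<sigma> p" if p: "p \<in> perms k - cyc \<pi>" for p
  proof
    assume "cyc_contains ?\<sigma> p"
    then obtain i where "order_iso (take k (rotate i ?\<sigma>)) p"
      using p length_perms by (auto simp: cyc_contains_def)
    moreover have "order_iso (take k (rotate i ?\<sigma>)) (rotate i \<pi>)"
      using order_iso_window_blowup[OF \<pi>] by simp
    ultimately have "order_iso p (rotate i \<pi>)"
      by (auto simp: order_iso_def)
    then have "p = rotate i \<pi>"
      using p rotate_in_perms[OF \<pi>] order_iso_perms_eq by blast
    then show False
      using p by (simp add: cyc_def)
  qed
  moreover have "Suc N * 1 \<le> Suc N * k"
    using k by (intro mult_le_mono2) simp
  then have "N \<le> Suc N * k"
    by simp
  ultimately show "\<exists>n\<ge>N. \<exists>\<sigma>\<in>perms n. \<forall>p\<in>perms k - cyc \<pi>. \<not> cyc_contains \<sigma> p"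
    using blowup_in_perms[OF \<pi>] by blast
qed

lemma cyc_contains_standardize_window:
  assumes "k \<le> length \<sigma>" "\<sigma> \<noteq> []"
  shows "cyc_contains \<sigma> (standardize (take k (rotate i \<sigma>)))"
  unfolding cyc_contains_def
proof (intro conjI exI)
  have len: "length (standardize (take k (rotate i \<sigma>))) = k"
    using assms by (simp add: standardize_def)
  then show "length (standardize (take k (rotate i \<sigma>))) \<le> length \<sigma>"
    using assms by simp
  show "i mod length \<sigma> < length \<sigma>"
    using assms by simp
  show "order_iso (take (length (standardize (take k (rotate i \<sigma>))))
      (rotate (i mod length \<sigma>) \<sigma>)) (standardize (take k (rotate i \<sigma>)))"
    using order_iso_standardize len by (metis rotate_conv_mod)
qed

lemma take_rotate_nth_less_max:
  assumes \<sigma>: "\<sigma> \<in> perms n" and i0: "i0 < n" "\<sigma> ! i0 = n - 1"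
    and kn: "k \<le> n" and j: "j < k" and t: "t < k" "t \<noteq> j"
  shows "take k (rotate (i0 + n - j) \<sigma>) ! t < take k (rotate (i0 + n - j) \<sigma>) ! j"
proof -
  let ?W = "take k (rotate (i0 + n - j) \<sigma>)"
  have len: "length \<sigma> = n" and set: "set \<sigma> = {0..<n}"
    using \<sigma> by (auto simp: perms_def length_perms)
  have "?W ! j = \<sigma> ! ((i0 + n - j + j) mod n)"
    using j kn len by (simp add: nth_rotate)
  also have "(i0 + n - j + j) mod n = i0"
    using i0 j kn by simp
  finally have "?W ! j = n - 1"
    using i0 by simp
  moreover have "?W ! t \<noteq> ?W ! j"
    using \<sigma> j t kn len by (simp add: perms_def nth_eq_iff_index_eq)
  moreover have "?W ! t \<in> set \<sigma>"
    using t kn len set_take_subset[of k "rotate (i0 + n - j) \<sigma>"] nth_mem[of t ?W] by auto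
  then have "?W ! t < n"
    using set by simp
  ultimately show ?thesis
    by linarith
qed

lemma card_contained_patterns_ge:
  assumes \<sigma>: "\<sigma> \<in> perms n" and kn: "k \<le> n"
  shows "k \<le> card {p \<in> perms k. cyc_contains \<sigma> p}"
proof (cases "k = 0")
  case False
  have len: "length \<sigma> = n" and dist: "distinct \<sigma>"
    using \<sigma> by (auto simp: perms_def length_perms)
  have "n - 1 \<in> set \<sigma>"
    using \<sigma> False kn by (auto simp: perms_def)
  then obtain i0 where i0: "i0 < n" "\<sigma> ! i0 = n - 1"
    using len by (metis in_set_conv_nth)
  define W where "W j = take k (rotate (i0 + n - j) \<sigma>)" for j
  define P where "P j = standardize (W j)" for j
  have len_W: "length (W j) = k" and dist_W: "distinct (W j)" for j
    using kn len dist by (simp_all add: W_def)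
  have P_max: "P j ! t < P j ! j" if "j < k" "t < k" "t \<noteq> j" for j t
  proof -
    have "order_iso (W j) (P j)"
      by (simp add: P_def order_iso_standardize)
    then show ?thesis
      using take_rotate_nth_less_max[OF \<sigma> i0 kn that] that len_W[of j]
      unfolding order_iso_def W_def by auto
  qed
  have "inj_on P {..<k}"
  proof (rule inj_onI, rule ccontr)
    fix a b assume "a \<in> {..<k}" "b \<in> {..<k}" "P a = P b" "a \<noteq> b"
    then show False
      using P_max[of a b] P_max[of b a] by auto
  qed
  then have "card (P ` {..<k}) = k"
    by (simp add: card_image)
  moreover have "P j \<in> perms k" for j
    using standardize_in_perms[OF dist_W] len_W by (simp add: P_def)
  moreover have "cyc_contains \<sigma> (P j)" for j
    unfolding P_def W_def using kn len False
    by (intro cyc_contains_standardize_window) auto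
  then have "card (P ` {..<k}) \<le> card {p \<in> perms k. cyc_contains \<sigma> p}"
    using calculation(2) by (intro card_mono) auto
  ultimately show ?thesis
    by simp
qed simp

lemma card_avoidable_le:
  assumes sub: "\<Pi> \<subseteq> perms k" and av: "avoidable \<Pi>"
  shows "card \<Pi> + k \<le> card (perms k)"
proof -
  obtain n \<sigma> where kn: "k \<le> n" and \<sigma>: "\<sigma> \<in> perms n"
    and avoids: "\<forall>p\<in>\<Pi>. \<not> cyc_contains \<sigma> p"
    using av unfolding avoidable_iff by blast
  define C where "C = {p \<in> perms k. cyc_contains \<sigma> p}"
  have "C \<subseteq> perms k"
    by (simp add: C_def)
  have "card \<Pi> \<le> card (perms k - C)"
    using sub avoids by (intro card_mono) (auto simp: C_def)
  also have "\<dots> = card (perms k) - card C"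
    using \<open>C \<subseteq> perms k\<close> finite_subset[OF \<open>C \<subseteq> perms k\<close> finite_perms]
    by (intro card_Diff_subset)
  finally show ?thesis
    using card_contained_patterns_ge[OF \<sigma> kn] card_mono[OF finite_perms \<open>C \<subseteq> perms k\<close>]
    by (simp add: C_def)
qed

lemma cyc_eq_image:
  assumes "xs \<noteq> []"
  shows "cyc xs = (\<lambda>i. rotate i xs) ` {..<length xs}"
proof -
  have "rotate i xs \<in> (\<lambda>i. rotate i xs) ` {..<length xs}" for i
  proof (rule image_eqI)
    show "rotate i xs = rotate (i mod length xs) xs"
      by (rule rotate_conv_mod)
    show "i mod length xs \<in> {..<length xs}"
      using assms by simp
  qed
  then show ?thesis
    by (auto simp: cyc_def)
qed

theorem proposition7p2:
  fixes \<pi> :: "nat list" and k :: nat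
  assumes "\<pi> \<in> perms k"
  shows "avoidable (perms k - cyc \<pi>) \<and>
         (\<forall>\<Pi>. \<Pi> \<subseteq> perms k \<and> avoidable \<Pi> \<longrightarrow> card \<Pi> \<le> card (perms k - cyc \<pi>))"
proof (cases "k = 0")
  case True
  then have perms_k: "perms k = {[]}"
    by (auto simp: perms_def)
  moreover have "cyc [] = {[]}"
    by (simp add: cyc_def)
  ultimately have no_patterns: "perms k - cyc \<pi> = {}"
    using assms by simp
  have "card \<Pi> = 0" if "\<Pi> \<subseteq> perms k" "avoidable \<Pi>" for \<Pi>
    using that(1) Nil_notin_avoidable[OF that(2)] by (auto simp: perms_k subset_singleton_iff)
  then show ?thesis
    unfolding no_patterns using avoidable_empty by simp
next
  case False
  have len: "length \<pi> = k"
    using assms by (rule length_perms)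
  with False have "cyc \<pi> = (\<lambda>i. rotate i \<pi>) ` {..<k}"
    using cyc_eq_image[of \<pi>] by auto
  then have fin: "finite (cyc \<pi>)" and card_cyc: "card (cyc \<pi>) \<le> k"
    using card_image_le[of "{..<k}" "\<lambda>i. rotate i \<pi>"] by simp_all
  have "card \<Pi> \<le> card (perms k - cyc \<pi>)" if "\<Pi> \<subseteq> perms k" "avoidable \<Pi>" for \<Pi>
  proof -
    have "card \<Pi> \<le> card (perms k) - card (cyc \<pi>)"
      using card_avoidable_le[OF that] card_cyc by simp
    also have "\<dots> \<le> card (perms k - cyc \<pi>)"
      by (rule diff_card_le_card_Diff[OF fin])
    finally show ?thesis .
  qed
  with avoidable_perms_diff_cyc[OF assms] False show ?thesis
    by simp
qed

end
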